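(* Let $a_1,\dots,a_n$ be real numbers with $n=k\ell$ odd (for positive integers $k,\ell$). Let $\Pi$ be the set of all partitions $\pi=\{S_1,\dots,S_\ell\}$ of $[n]$ into $\ell$ blocks each of size $k$. Then \[ \operatorname{median}_{\pi\in\Pi}\ \operatorname{median}_{b\in[\ell]}\ \operatorname{median}_{i\in S_b} a_i=\operatorname{median}_{i\in[n]} a_i . \]
   Context: The median of a finite list of odd length is its middle element after sorting; the median of a list of even length (which may occur for the outer median over $\Pi$) is the average of its two middle elements. The outer median is taken over the list of values, one for each partition $\pi\in\Pi$. *)

theory Defs
  imports Complex_Main "HOL-Library.Multiset" "HOL-Library.Disjoint_Sets"
begin

definition median_list :: "real list \<Rightarrow> real" where
  "median_list xs = (let ys = sort xs; m = length ys in
     if odd m then ys ! (m div 2)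
     else (ys ! (m div 2 - 1) + ys ! (m div 2)) / 2)"

definition median_mset :: "real multiset \<Rightarrow> real" where
  "median_mset M = median_list (sorted_list_of_multiset M)"

definition median_over :: "('b \<Rightarrow> real) \<Rightarrow> 'b set \<Rightarrow> real" where
  "median_over f A = median_mset (image_mset f (mset_set A))"

definition equipartitions :: "nat \<Rightarrow> nat \<Rightarrow> nat \<Rightarrow> nat set set set" where
  "equipartitions n k l = {P. partition_on {1..n} P \<and> card P = l \<and> (\<forall>S\<in>P. card S = k)}"

end

(*
  Sort the values, breaking ties, so that a = h \<circ> g\<inverse> for a bijection g from {0..<n} onto {1..n}
  and h monotone; relabelling along g changes none of the medians. Medians commute with
  monotone maps, so the median of a block is h at its median rank, the median of a partition
  is h at the median of its block-median ranks, and the median of all values is h (n div 2).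
  The reflection x \<mapsto> n - 1 - x of ranks maps equipartitions to equipartitions and reflects
  the median-of-medians rank about (n - 1) / 2, so as many partitions have this rank below
  n div 2 as above it, and the partition into consecutive intervals hits n div 2 exactly.
  Hence fewer than half of the partitions have value below h (n div 2) and fewer than half
  above it, which pins the outer median down to h (n div 2).
*)
theory Submission
  imports Defs
begin

lemma sorted_nth_eqI:
  fixes ys :: "'a::linorder list"
  assumes sorted: "sorted ys" and i: "i < length ys"
    and below: "length (filter (\<lambda>x. x < m) ys) \<le> i"
    and above: "i + length (filter (\<lambda>x. m < x) ys) < length ys"
  shows "ys ! i = m"
proof (rule ccontr)
  assume "ys ! i \<noteq> m"
  then consider "ys ! i < m" | "m < ys ! i" by (meson linorder_neqE)
  then show False
  proof cases
    case 1
    have "{..i} \<subseteq> {j. j < length ys \<and> ys ! j < m}"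
      using sorted i 1 by (auto intro: le_less_trans[OF sorted_nth_mono])
    then have "card {..i} \<le> length (filter (\<lambda>x. x < m) ys)"
      unfolding length_filter_conv_card by (rule card_mono[rotated]) simp
    then show False using below by simp
  next
    case 2
    have "{i..<length ys} \<subseteq> {j. j < length ys \<and> m < ys ! j}"
      using sorted i 2 by (auto intro: less_le_trans[OF _ sorted_nth_mono])
    then have "card {i..<length ys} \<le> length (filter (\<lambda>x. m < x) ys)"
      unfolding length_filter_conv_card by (rule card_mono[rotated]) simp
    then show False using above by simp
  qed
qed

lemma median_list_eqI:
  assumes "2 * length (filter (\<lambda>x. x < m) xs) < length xs"
    and "2 * length (filter (\<lambda>x. m < x) xs) < length xs"
  shows "median_list xs = m"
proof -
  let ?ys = "sort xs" and ?L = "length xs"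
  have filter_sort: "length (filter P ?ys) = length (filter P xs)" for P
    by (metis mset_filter mset_sort size_mset)
  define below where "below = length (filter (\<lambda>x. x < m) xs)"
  define above where "above = length (filter (\<lambda>x. m < x) xs)"
  have nth_eq: "?ys ! i = m" if "below \<le> i" "i + above < ?L" for i
    using that by (intro sorted_nth_eqI) (simp_all add: filter_sort below_def above_def)
  show ?thesis
  proof (cases "odd ?L")
    case True
    have "?ys ! (?L div 2) = m"
      using True assms[folded below_def above_def] by (intro nth_eq) presburger+
    then show ?thesis using True by (simp add: median_list_def)
  next
    case False
    have "?ys ! (?L div 2 - 1) = m" "?ys ! (?L div 2) = m"
      using False assms[folded below_def above_def] by (intro nth_eq; presburger)+
    then show ?thesis using False by (simp add: median_list_def)
  qed
qed

lemma median_over_eqI: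
  assumes "finite A"
    and "2 * card {x\<in>A. f x < m} < card A"
    and "2 * card {x\<in>A. m < f x} < card A"
  shows "median_over f A = m"
proof -
  let ?M = "image_mset f (mset_set A)"
  let ?ys = "sorted_list_of_multiset ?M"
  have count: "length (filter P ?ys) = card {x\<in>A. P (f x)}" for P
  proof -
    have "length (filter P ?ys) = size (filter_mset P ?M)"
      by (metis mset_filter mset_sorted_list_of_multiset size_mset)
    also have "\<dots> = card {x\<in>A. P (f x)}"
      using \<open>finite A\<close> by (simp add: filter_mset_image_mset filter_mset_mset_set)
    finally show ?thesis .
  qed
  have "length ?ys = card A"
    by (metis mset_sorted_list_of_multiset size_image_mset size_mset size_mset_set)
  then have "median_list ?ys = m"
    using assms by (intro median_list_eqI) (simp_all add: count)
  then show ?thesis by (simp add: median_over_def median_mset_def)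
qed

text \<open>The middle element of a set of odd cardinality; unspecified for the empty set.\<close>
definition median_elem :: "'a::linorder set \<Rightarrow> 'a" where
  "median_elem K = sorted_list_of_set K ! (card K div 2)"

lemma median_elem_in:
  assumes "finite K" "K \<noteq> {}"
  shows "median_elem K \<in> K"
proof -
  have "card K div 2 < length (sorted_list_of_set K)"
    using assms by (simp add: card_gt_0_iff)
  then show ?thesis
    unfolding median_elem_def using assms by (metis nth_mem set_sorted_list_of_set)
qed

lemma median_over_mono_on:
  assumes "finite K" "odd (card K)" "mono_on K h"
  shows "median_over h K = h (median_elem K)"
proof -
  let ?L = "sorted_list_of_set K"
  have sorted: "sorted (map h ?L)"
    using assms by (intro sorted_map_mono) simp_all
  have "image_mset h (mset_set K) = mset (map h ?L)"
    by (metis distinct_sorted_list_of_set mset_map mset_set_set set_sorted_list_of_set \<open>finite K\<close>)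
  then have "sorted_list_of_multiset (image_mset h (mset_set K)) = map h ?L"
    using sorted by (metis sorted_list_of_multiset_mset sorted_sort_id)
  moreover have "card K div 2 < card K"
    using \<open>odd (card K)\<close> by presburger
  ultimately show ?thesis
    using assms sorted
    by (simp add: median_over_def median_mset_def median_list_def median_elem_def sorted_sort_id)
qed

lemma median_elem_strict_mono_image:
  assumes "finite K" "K \<noteq> {}" "strict_mono_on K f"
  shows "median_elem (f ` K) = f (median_elem K)"
proof -
  let ?L = "sorted_list_of_set K"
  have card_eq: "card (f ` K) = card K"
    using assms by (intro card_image strict_mono_on_imp_inj_on)
  have "sorted_wrt (<) (map f ?L)"
    using assms by (intro sorted_wrt_map_mono[OF strict_sorted_list_of_set])
      (simp add: monotone_onD)
  then have "sorted_list_of_set (f ` K) = map f ?L"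
    using assms card_eq by (subst sorted_list_of_set_unique[symmetric]) simp_all
  moreover have "card K div 2 < card K"
    using assms by (simp add: card_gt_0_iff)
  ultimately show ?thesis
    by (simp add: median_elem_def card_eq)
qed

lemma median_elem_strict_antimono_image:
  assumes "finite K" "odd (card K)" "strict_antimono_on K f"
  shows "median_elem (f ` K) = f (median_elem K)"
proof -
  let ?L = "sorted_list_of_set K"
  have card_eq: "card (f ` K) = card K"
    using assms by (intro card_image strict_antimono_iff_antimono[THEN iffD1, THEN conjunct2])
  have "sorted_wrt (\<lambda>x y. y < x) (map f ?L)"
    using assms by (intro sorted_wrt_map_mono[OF strict_sorted_list_of_set])
      (auto dest: monotone_onD)
  then have "sorted_list_of_set (f ` K) = rev (map f ?L)"
    using assms card_eq
    by (subst sorted_list_of_set_unique[symmetric]) (simp_all add: sorted_wrt_rev)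
  moreover have "card K - Suc (card K div 2) = card K div 2" "card K div 2 < card K"
    using \<open>odd (card K)\<close> by presburger+
  ultimately show ?thesis
    by (simp add: median_elem_def card_eq rev_nth)
qed

lemma median_elem_atLeastLessThan:
  fixes m n :: nat
  assumes "m < n"
  shows "median_elem {m..<n} = m + (n - m) div 2"
  using assms by (simp add: median_elem_def)

lemma median_over_cong:
  assumes "\<And>x. x \<in> A \<Longrightarrow> f x = g x"
  shows "median_over f A = median_over g A"
proof -
  have "image_mset f (mset_set A) = image_mset g (mset_set A)"
    using assms by (intro image_mset_cong) (metis elem_mset_set empty_iff mset_set.infinite set_mset_empty)
  then show ?thesis by (simp add: median_over_def)
qed

lemma median_over_image:
  assumes "inj_on g A"
  shows "median_over f (g ` A) = median_over (\<lambda>x. f (g x)) A"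
  using assms
  by (simp add: median_over_def image_mset_mset_set[symmetric] multiset.map_comp comp_def)

lemma median_over_mono_comp_eqI:
  fixes r :: "'a \<Rightarrow> 'b::linorder"
  assumes "finite A" "mono_on S h" "r ` A \<subseteq> S" "c \<in> S"
    and below: "2 * card {x\<in>A. r x < c} < card A"
    and above: "2 * card {x\<in>A. c < r x} < card A"
  shows "median_over (\<lambda>x. h (r x)) A = h c"
proof (rule median_over_eqI)
  have h_mono: "h y \<le> h z" if "y \<in> S" "z \<in> S" "y \<le> z" for y z
    using \<open>mono_on S h\<close> that by (rule mono_onD)
  have "{x\<in>A. h (r x) < h c} \<subseteq> {x\<in>A. r x < c}"
    using assms h_mono by (force simp: not_less[symmetric])
  then have "card {x\<in>A. h (r x) < h c} \<le> card {x\<in>A. r x < c}"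
    using \<open>finite A\<close> by (intro card_mono) simp_all
  then show "2 * card {x\<in>A. h (r x) < h c} < card A"
    using below by linarith
  have "{x\<in>A. h c < h (r x)} \<subseteq> {x\<in>A. c < r x}"
    using assms h_mono by (force simp: not_less[symmetric])
  then have "card {x\<in>A. h c < h (r x)} \<le> card {x\<in>A. c < r x}"
    using \<open>finite A\<close> by (intro card_mono) simp_all
  then show "2 * card {x\<in>A. h c < h (r x)} < card A"
    using above by linarith
qed (fact \<open>finite A\<close>)

lemma reflection_balances_ranks:
  fixes r :: "'a \<Rightarrow> nat"
  assumes "finite A" "x\<^sub>0 \<in> A" "r x\<^sub>0 = c"
    and maps_to: "\<And>x. x \<in> A \<Longrightarrow> \<phi> x \<in> A"
    and involution: "\<And>x. x \<in> A \<Longrightarrow> \<phi> (\<phi> x) = x"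
    and reflects: "\<And>x. x \<in> A \<Longrightarrow> r (\<phi> x) + r x = 2 * c"
  shows "2 * card {x\<in>A. r x < c} < card A" and "2 * card {x\<in>A. c < r x} < card A"
proof -
  let ?below = "{x\<in>A. r x < c}" and ?above = "{x\<in>A. c < r x}"
  have "\<phi> ` ?below = ?above"
  proof (intro equalityI subsetI)
    fix y assume "y \<in> \<phi> ` ?below"
    then show "y \<in> ?above" using maps_to reflects by fastforce
  next
    fix y assume y: "y \<in> ?above"
    then have "\<phi> y \<in> ?below" using maps_to reflects by fastforce
    then show "y \<in> \<phi> ` ?below" using y involution by (metis (no_types, lifting) image_eqI mem_Collect_eq)
  qed
  moreover have "inj_on \<phi> A"
    using involution by (metis inj_onI)
  ultimately have same_card: "card ?above = card ?below"
    by (metis (no_types, lifting) card_image inj_on_subset mem_Collect_eq subsetI)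
  have "?below \<union> ?above \<union> {x\<^sub>0} \<subseteq> A" using assms by auto
  then have "card (?below \<union> ?above \<union> {x\<^sub>0}) \<le> card A"
    using \<open>finite A\<close> by (rule card_mono[rotated])
  moreover have "card (?below \<union> ?above \<union> {x\<^sub>0}) = card ?below + card ?above + 1"
    using assms by (simp add: card_Un_disjoint disjoint_iff)
  ultimately show "2 * card ?below < card A" "2 * card ?above < card A"
    using same_card by linarith+
qed

definition equipartitions_on :: "'a set \<Rightarrow> nat \<Rightarrow> nat \<Rightarrow> 'a set set set" where
  "equipartitions_on A k l = {P. partition_on A P \<and> card P = l \<and> (\<forall>S\<in>P. card S = k)}"

lemma equipartitions_eq_equipartitions_on: "equipartitions n k l = equipartitions_on {1..n} k l"
  by (simp add: equipartitions_def equipartitions_on_def)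

lemma finite_equipartitions_on: "finite A \<Longrightarrow> finite (equipartitions_on A k l)"
  unfolding equipartitions_on_def
  by (rule finite_subset[OF _ finitely_many_partition_on]) auto

lemma equipartitions_on_Pow: "equipartitions_on A k l \<subseteq> Pow (Pow A)"
  by (auto simp: equipartitions_on_def partition_on_def)

lemma image_in_equipartitions_on:
  assumes "inj_on g A" "P \<in> equipartitions_on A k l"
  shows "(`) g ` P \<in> equipartitions_on (g ` A) k l"
proof -
  have P: "partition_on A P" "card P = l" "\<And>S. S \<in> P \<Longrightarrow> card S = k"
    using assms(2) by (auto simp: equipartitions_on_def)
  have blocks: "\<And>S. S \<in> P \<Longrightarrow> S \<subseteq> A"
    using P(1) by (auto simp: partition_on_def)
  have "(`) g ` P - {{}} = (`) g ` P"
    using partition_onD3[OF P(1)] by auto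
  then have "partition_on (g ` A) ((`) g ` P)"
    using partition_on_inj_image[OF P(1) \<open>inj_on g A\<close>] by simp
  moreover have "inj_on ((`) g) P"
    using inj_on_image_Pow[OF \<open>inj_on g A\<close>] blocks by (auto intro: inj_on_subset)
  moreover have "card (g ` S) = k" if "S \<in> P" for S
    using that P(3) blocks \<open>inj_on g A\<close> by (metis card_image inj_on_subset)
  ultimately show ?thesis
    using P(2) by (auto simp: equipartitions_on_def card_image)
qed

lemma equipartitions_on_image:
  assumes "inj_on g A"
  shows "equipartitions_on (g ` A) k l = (\<lambda>P. (`) g ` P) ` equipartitions_on A k l"
proof (intro equalityI subsetI)
  fix Q assume Q: "Q \<in> equipartitions_on (g ` A) k l"
  let ?g' = "inv_into A g"
  have "(`) ?g' ` Q \<in> equipartitions_on (?g' ` g ` A) k l"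
    using Q assms by (intro image_in_equipartitions_on inj_on_inv_into) simp_all
  moreover have "?g' ` g ` A = A"
    using assms by simp
  moreover have "(`) g ` (`) ?g' ` Q = Q"
  proof -
    have "g ` ?g' ` S = S" if "S \<in> Q" for S
    proof -
      have "S \<subseteq> g ` A" using that Q equipartitions_on_Pow by blast
      then show ?thesis by (rule image_inv_into_cancel[OF refl])
    qed
    then show ?thesis by (simp add: image_comp)
  qed
  ultimately show "Q \<in> (\<lambda>P. (`) g ` P) ` equipartitions_on A k l"
    by (metis image_eqI)
next
  fix Q assume "Q \<in> (\<lambda>P. (`) g ` P) ` equipartitions_on A k l"
  then show "Q \<in> equipartitions_on (g ` A) k l"
    using assms image_in_equipartitions_on by blast
qed

definition iterated_median :: "('a \<Rightarrow> real) \<Rightarrow> 'a set set set \<Rightarrow> real" where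
  "iterated_median a E = median_over (\<lambda>P. median_over (median_over a) P) E"

lemma iterated_median_image:
  assumes "inj_on g A"
  shows "iterated_median a (equipartitions_on (g ` A) k l)
       = iterated_median (\<lambda>x. a (g x)) (equipartitions_on A k l)"
proof -
  have inj_blocks: "inj_on ((`) g) (Pow A)"
    using assms by (rule inj_on_image_Pow)
  have "inj_on (\<lambda>P. (`) g ` P) (equipartitions_on A k l)"
    using inj_on_image_Pow[OF inj_blocks] equipartitions_on_Pow by (rule inj_on_subset)
  then have "iterated_median a (equipartitions_on (g ` A) k l)
      = median_over (\<lambda>P. median_over (median_over a) ((`) g ` P)) (equipartitions_on A k l)"
    unfolding iterated_median_def equipartitions_on_image[OF assms] by (rule median_over_image)
  also have "\<dots> = iterated_median (\<lambda>x. a (g x)) (equipartitions_on A k l)"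
    unfolding iterated_median_def
  proof (rule median_over_cong)
    fix P assume "P \<in> equipartitions_on A k l"
    then have blocks: "P \<subseteq> Pow A" using equipartitions_on_Pow by blast
    then have "median_over (median_over a) ((`) g ` P) = median_over (\<lambda>S. median_over a (g ` S)) P"
      using inj_blocks by (metis median_over_image inj_on_subset)
    also have "\<dots> = median_over (median_over (\<lambda>x. a (g x))) P"
    proof (rule median_over_cong)
      fix S assume "S \<in> P"
      then have "inj_on g S" using blocks assms by (auto intro: inj_on_subset)
      then show "median_over a (g ` S) = median_over (\<lambda>x. a (g x)) S"
        by (rule median_over_image)
    qed
    finally show "median_over (median_over a) ((`) g ` P) = median_over (median_over (\<lambda>x. a (g x))) P" .
  qed
  finally show ?thesis .
qed

lemma median_elem_in_block:
  assumes "partition_on A P" "finite A" "S \<in> P"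
  shows "median_elem S \<in> S"
proof (rule median_elem_in)
  show "finite S" using assms partition_onD1 by (metis Union_upper finite_subset)
  show "S \<noteq> {}" using assms partition_onD3 by blast
qed

lemma inj_on_median_elem:
  assumes "partition_on A P" "finite A"
  shows "inj_on median_elem P"
proof (rule inj_onI)
  fix S T assume ST: "S \<in> P" "T \<in> P" "median_elem S = median_elem T"
  then have "median_elem S \<in> S \<inter> T"
    using assms median_elem_in_block by (metis IntI)
  then show "S = T"
    using partition_onD2[OF assms(1)] ST by (auto dest: disjointD)
qed

definition median_of_medians :: "'a::linorder set set \<Rightarrow> 'a" where
  "median_of_medians P = median_elem (median_elem ` P)"

lemma median_elem_image_subset:
  assumes "partition_on A P" "finite A"
  shows "median_elem ` P \<subseteq> A"
  using assms median_elem_in_block partition_onD1 by blast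

lemma median_of_medians_in:
  assumes "partition_on A P" "finite A" "P \<noteq> {}"
  shows "median_of_medians P \<in> A"
proof -
  have "finite P" using assms finite_elements by blast
  then have "median_elem (median_elem ` P) \<in> median_elem ` P"
    using assms by (intro median_elem_in) simp_all
  then show ?thesis
    unfolding median_of_medians_def using median_elem_image_subset[OF assms(1,2)] by blast
qed

lemma median_over_block_medians:
  assumes P: "partition_on A P" "finite A" and "mono_on A h"
    and "odd (card P)" "\<And>S. S \<in> P \<Longrightarrow> odd (card S)"
  shows "median_over (median_over h) P = h (median_of_medians P)"
proof -
  have "median_over (median_over h) P = median_over (\<lambda>S. h (median_elem S)) P"
  proof (rule median_over_cong)
    fix S assume "S \<in> P"
    then have "S \<subseteq> A" using partition_onD1[OF P(1)] by blast
    then show "median_over h S = h (median_elem S)"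
      using \<open>S \<in> P\<close> assms by (metis finite_subset median_over_mono_on mono_on_subset)
  qed
  also have "\<dots> = median_over h (median_elem ` P)"
    using inj_on_median_elem[OF P] by (simp add: median_over_image)
  also have "\<dots> = h (median_of_medians P)"
    unfolding median_of_medians_def
  proof (rule median_over_mono_on)
    show "finite (median_elem ` P)" using P finite_elements by blast
    show "odd (card (median_elem ` P))"
      using \<open>odd (card P)\<close> inj_on_median_elem[OF P] by (simp add: card_image)
    show "mono_on (median_elem ` P) h"
      using \<open>mono_on A h\<close> median_elem_image_subset[OF P] by (rule mono_on_subset)
  qed
  finally show ?thesis .
qed

lemma median_of_medians_strict_antimono_image:
  assumes P: "partition_on A P" "finite A" and "strict_antimono_on A \<rho>"
    and "odd (card P)" "\<And>S. S \<in> P \<Longrightarrow> odd (card S)"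
  shows "median_of_medians ((`) \<rho> ` P) = \<rho> (median_of_medians P)"
proof -
  have "median_elem ` (`) \<rho> ` P = \<rho> ` median_elem ` P"
    unfolding image_comp
  proof (rule image_cong)
    fix S assume "S \<in> P"
    then have "S \<subseteq> A" using partition_onD1[OF P(1)] by blast
    then show "(median_elem \<circ> (`) \<rho>) S = (\<rho> \<circ> median_elem) S"
      using \<open>S \<in> P\<close> assms
      by (simp add: median_elem_strict_antimono_image finite_subset monotone_on_subset)
  qed simp
  moreover have "median_elem (\<rho> ` median_elem ` P) = \<rho> (median_elem (median_elem ` P))"
  proof (rule median_elem_strict_antimono_image)
    show "finite (median_elem ` P)" using P finite_elements by blast
    show "odd (card (median_elem ` P))"
      using \<open>odd (card P)\<close> inj_on_median_elem[OF P] by (simp add: card_image)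
    show "strict_antimono_on (median_elem ` P) \<rho>"
      using \<open>strict_antimono_on A \<rho>\<close> median_elem_image_subset[OF P] by (rule monotone_on_subset)
  qed
  ultimately show ?thesis
    by (simp add: median_of_medians_def)
qed

lemma interval_blocks_equipartition:
  fixes k l :: nat
  assumes "0 < k" "odd l"
  shows "\<exists>P \<in> equipartitions_on {0..<k * l} k l. median_of_medians P = k * l div 2"
proof -
  define block where "block t = {t * k..<t * k + k}" for t
  define P where "P = block ` {0..<l}"
  have block_iff: "x \<in> block t \<longleftrightarrow> x div k = t" for x t
    using \<open>0 < k\<close> unfolding block_def atLeastLessThan_iff
    by (metis add.commute div_nat_eqI dividend_less_times_div
        mult.commute mult_Suc times_div_less_eq_dividend)
  have "x \<in> \<Union>P \<longleftrightarrow> x \<in> {0..<k * l}" for x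
  proof -
    have "x \<in> \<Union>P \<longleftrightarrow> x div k < l" unfolding P_def by (auto simp: block_iff)
    also have "\<dots> \<longleftrightarrow> x < k * l"
      using \<open>0 < k\<close> by (simp add: div_less_iff_less_mult mult.commute)
    finally show ?thesis by simp
  qed
  then have "\<Union>P = {0..<k * l}" by blast
  have block_nonempty: "t * k \<in> block t" for t
    using \<open>0 < k\<close> by (simp add: block_def)
  have "partition_on {0..<k * l} P"
  proof (rule partition_onI)
    show "disjnt p q" if "p \<in> P" "q \<in> P" "p \<noteq> q" for p q
      using that unfolding P_def by (auto simp: disjnt_def block_iff)
    show "{} \<notin> P" unfolding P_def using block_nonempty by blast
  qed fact
  moreover have "inj_on block {0..<l}"
    by (rule inj_onI) (metis block_nonempty block_iff)
  then have "card P = l" unfolding P_def by (simp add: card_image)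
  moreover have "card S = k" if "S \<in> P" for S
    using that by (auto simp: P_def block_def)
  ultimately have "P \<in> equipartitions_on {0..<k * l} k l"
    by (simp add: equipartitions_on_def)
  moreover have "median_of_medians P = k * l div 2"
  proof -
    define mid where "mid t = t * k + k div 2" for t
    have "median_elem ` P = mid ` {0..<l}"
      unfolding P_def image_comp
      using \<open>0 < k\<close> by (intro image_cong) (simp_all add: block_def mid_def median_elem_atLeastLessThan)
    moreover have "strict_mono_on {0..<l} mid"
      using \<open>0 < k\<close> by (intro strict_mono_onI) (simp add: mid_def)
    moreover have "0 < l" using \<open>odd l\<close> by presburger
    ultimately have "median_of_medians P = mid (l div 2)"
      by (simp add: median_of_medians_def median_elem_strict_mono_image median_elem_atLeastLessThan)
    also have "\<dots> = k * l div 2"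
      using \<open>odd l\<close> by (auto simp: mid_def elim!: oddE) (simp add: algebra_simps)
    finally show ?thesis .
  qed
  ultimately show ?thesis by blast
qed

lemma equipartition_reflection:
  fixes n :: nat
  assumes "P \<in> equipartitions_on {0..<n} k l" "odd k" "odd l"
  shows "(`) (\<lambda>x. n - 1 - x) ` P \<in> equipartitions_on {0..<n} k l"
    and "(`) (\<lambda>x. n - 1 - x) ` (`) (\<lambda>x. n - 1 - x) ` P = P"
    and "median_of_medians ((`) (\<lambda>x. n - 1 - x) ` P) + median_of_medians P = n - 1"
proof -
  define \<rho> where "\<rho> x = n - 1 - x" for x
  have P: "partition_on {0..<n} P" "odd (card P)" "P \<noteq> {}" "\<And>S. S \<in> P \<Longrightarrow> odd (card S)"
    using assms by (auto simp: equipartitions_on_def)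
  have \<rho>\<rho>: "\<rho> (\<rho> x) = x" if "x < n" for x
    using that by (simp add: \<rho>_def)
  have antimono: "strict_antimono_on {0..<n} \<rho>"
    by (auto simp: \<rho>_def monotone_on_def)
  then have "inj_on \<rho> {0..<n}"
    using strict_antimono_iff_antimono by blast
  moreover have "\<rho> ` {0..<n} = {0..<n}"
  proof -
    have "x \<in> \<rho> ` {0..<n}" if "x < n" for x
      using that \<rho>\<rho>[OF that] by (intro image_eqI[of x \<rho> "\<rho> x"]) (auto simp: \<rho>_def)
    then show ?thesis by (auto simp: \<rho>_def)
  qed
  ultimately show "(`) (\<lambda>x. n - 1 - x) ` P \<in> equipartitions_on {0..<n} k l"
    using image_in_equipartitions_on[OF _ assms(1)] unfolding \<rho>_def[abs_def] by metis
  have "\<rho> ` \<rho> ` S = S" if "S \<in> P" for S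
  proof -
    have "S \<subseteq> {0..<n}" using assms(1) that equipartitions_on_Pow by blast
    then show ?thesis using \<rho>\<rho> by (force simp: image_comp)
  qed
  then show "(`) (\<lambda>x. n - 1 - x) ` (`) (\<lambda>x. n - 1 - x) ` P = P"
    unfolding \<rho>_def[symmetric] by (simp add: image_comp comp_def)
  have "median_of_medians P < n"
    using median_of_medians_in[OF P(1) _ P(3)] by simp
  then show "median_of_medians ((`) (\<lambda>x. n - 1 - x) ` P) + median_of_medians P = n - 1"
    using median_of_medians_strict_antimono_image[OF P(1) _ antimono P(2,4)]
    unfolding \<rho>_def[abs_def] by simp
qed

lemma iterated_median_mono_on:
  fixes h :: "nat \<Rightarrow> real"
  assumes "mono_on {0..<n} h" "n = k * l" "odd n"
  shows "iterated_median h (equipartitions_on {0..<n} k l) = h (n div 2)"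
proof -
  let ?E = "equipartitions_on {0..<n} k l" and ?c = "n div 2"
  have "odd k" "odd l" using assms by auto
  have "iterated_median h ?E = median_over (\<lambda>P. h (median_of_medians P)) ?E"
    unfolding iterated_median_def
    using \<open>odd k\<close> \<open>odd l\<close> assms(1)
    by (intro median_over_cong median_over_block_medians) (auto simp: equipartitions_on_def)
  also have "\<dots> = h ?c"
  proof (rule median_over_mono_comp_eqI[where S = "{0..<n}"])
    obtain P\<^sub>0 where P\<^sub>0: "P\<^sub>0 \<in> ?E" "median_of_medians P\<^sub>0 = ?c"
      using interval_blocks_equipartition \<open>odd k\<close> \<open>odd l\<close> assms(2) by (metis odd_pos)
    have "2 * ?c = n - 1" using \<open>odd n\<close> by presburger
    show "2 * card {P\<in>?E. median_of_medians P < ?c} < card ?E"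
      and "2 * card {P\<in>?E. ?c < median_of_medians P} < card ?E"
      by (rule reflection_balances_ranks[where \<phi> = "\<lambda>P. (`) (\<lambda>x. n - 1 - x) ` P" and x\<^sub>0 = P\<^sub>0];
          use P\<^sub>0 equipartition_reflection \<open>odd k\<close> \<open>odd l\<close> \<open>2 * ?c = n - 1\<close>
            in \<open>simp add: finite_equipartitions_on\<close>)+
    show "median_of_medians ` ?E \<subseteq> {0..<n}"
      using median_of_medians_in \<open>odd l\<close> by (fastforce simp: equipartitions_on_def)
    show "?c \<in> {0..<n}" using \<open>odd n\<close> by simp presburger
  qed (simp_all add: finite_equipartitions_on assms(1))
  finally show ?thesis .
qed

lemma exists_sorting_bijection:
  fixes a :: "'a::linorder \<Rightarrow> 'b::linorder"
  assumes "finite A"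
  shows "\<exists>g. bij_betw g {0..<card A} A \<and> mono_on {0..<card A} (\<lambda>i. a (g i))"
proof -
  define xs where "xs = sort_key a (sorted_list_of_set A)"
  have "distinct xs" "set xs = A" "length xs = card A"
    using assms by (simp_all add: xs_def)
  then have "bij_betw ((!) xs) {0..<card A} A"
    by (intro bij_betw_nth) auto
  moreover have "sorted (map a xs)"
    by (simp add: xs_def)
  then have "mono_on {0..<card A} (\<lambda>i. a (xs ! i))"
    using \<open>length xs = card A\<close> by (intro mono_onI) (auto simp: sorted_iff_nth_mono)
  ultimately show ?thesis by blast
qed

text \<open>The hypotheses \<open>k > 0\<close> and \<open>l > 0\<close> are implied by \<open>odd n\<close>.\<close>
theorem lemma6p4:
  fixes a :: "nat \<Rightarrow> real" and n k l :: nat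
  assumes "k > 0" and "l > 0" and "n = k * l" and "odd n"
  shows "median_over (\<lambda>P. median_over (\<lambda>S. median_over a S) P) (equipartitions n k l)
         = median_over a {1..n}"
proof -
  obtain g where g: "bij_betw g {0..<n} {1..n}" and mono: "mono_on {0..<n} (\<lambda>i. a (g i))"
    using exists_sorting_bijection[of "{1..n}" a] by auto
  then have "inj_on g {0..<n}" and image_g: "g ` {0..<n} = {1..n}"
    by (simp_all add: bij_betw_def)
  have "median_over (\<lambda>P. median_over (\<lambda>S. median_over a S) P) (equipartitions n k l)
      = iterated_median (\<lambda>i. a (g i)) (equipartitions_on {0..<n} k l)"
    unfolding equipartitions_eq_equipartitions_on image_g[symmetric]
    using iterated_median_image[OF \<open>inj_on g {0..<n}\<close>] by (simp add: iterated_median_def)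
  also have "\<dots> = a (g (n div 2))"
    using iterated_median_mono_on[OF mono assms(3,4)] .
  also have "\<dots> = median_over a {1..n}"
  proof -
    have "median_over a {1..n} = median_over (\<lambda>i. a (g i)) {0..<n}"
      unfolding image_g[symmetric] using \<open>inj_on g {0..<n}\<close> by (rule median_over_image)
    also have "\<dots> = a (g (median_elem {0..<n}))"
      using mono \<open>odd n\<close> by (simp add: median_over_mono_on)
    finally show ?thesis
      using \<open>odd n\<close> by (simp add: median_elem_atLeastLessThan odd_pos)
  qed
  finally show ?thesis .
qed

end
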